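(* Let $X$ be a real Banach space and $f:X\to\mathbb{R}\cup\{+\infty\}$ proper, convex and lsc. Then for every $(w,v^* )\in\mathrm{dom}\, f\times\mathrm{dom}\, f^*$, \[ f(w)+f^*(v^* ) = F_{\partial f}(w,v^* ) + K_{\partial f}(w,v^* ). \]
   Context: $f^*$ is the Fenchel conjugate. For $\varepsilon\ge0$, $\partial_\varepsilon f(x)=\{x^*: f(y)-f(x)\ge\langle y-x,x^*\rangle-\varepsilon\ \forall y\}$, and analogously $\partial_\varepsilon f^*(x^* )=\{y\in X: f^*(z^* )-f^*(x^* )\ge\langle y,z^*-x^*\rangle-\varepsilon\ \forall z^*\}$. Define $\partial_\varepsilon(f^*\oplus f)(x,x^* )=\{(y,y^* )\in X\times X^*: y^*\in\partial_a f(x),\ y\in\partial_b f^*(x^* )\text{ for some } a,b\ge0 \text{ with } a+b\le\varepsilon\}$ and $K_{\partial f}(x,x^* )=\inf\{\varepsilon\ge0: \mathrm{Gr}(\partial f)\cap\partial_\varepsilon(f^*\oplus f)(x,x^* )\neq\varnothing\}$. $F_{\partial f}(x,x^* )=\sup_{(y,y^* )\in\mathrm{Gr}(\partial f)}\{\langle y,x^*\rangle+\langle x,y^*\rangle-\langle y,y^*\rangle\}$. *)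

theory Defs
  imports "HOL-Analysis.Analysis" "HOL-Library.Extended_Real"
begin

text \<open>X is a real Banach space ('a::banach); its topological dual X* is the type
  of bounded linear functionals blinfun from 'a to real; the pairing is blinfun_apply.\<close>

definition proper_fun :: "('a \<Rightarrow> ereal) \<Rightarrow> bool" where
  "proper_fun f \<longleftrightarrow> (\<forall>x. f x \<noteq> -\<infinity>) \<and> (\<exists>x. f x \<noteq> \<infinity>)"

definition convex_fun :: "('a::real_vector \<Rightarrow> ereal) \<Rightarrow> bool" where
  "convex_fun f \<longleftrightarrow> (\<forall>x y t. 0 < t \<and> t < 1 \<longrightarrow>
      f (t *\<^sub>R x + (1 - t) *\<^sub>R y) \<le> ereal t * f x + ereal (1 - t) * f y)"

definition lsc_fun :: "('a::topological_space \<Rightarrow> ereal) \<Rightarrow> bool" where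
  "lsc_fun f \<longleftrightarrow> (\<forall>c::real. closed {x. f x \<le> ereal c})"

definition edom :: "('a \<Rightarrow> ereal) \<Rightarrow> 'a set" where
  "edom f = {x. f x < \<infinity>}"

definition fconj :: "('a::real_normed_vector \<Rightarrow> ereal) \<Rightarrow> ('a \<Rightarrow>\<^sub>L real) \<Rightarrow> ereal" where
  "fconj f xs = (SUP x. ereal (blinfun_apply xs x) - f x)"

definition eps_subdiff :: "('a::real_normed_vector \<Rightarrow> ereal) \<Rightarrow> real \<Rightarrow> 'a \<Rightarrow> ('a \<Rightarrow>\<^sub>L real) set" where
  "eps_subdiff f e x = {xs. f x \<noteq> \<infinity> \<and> f x \<noteq> -\<infinity> \<and>
      (\<forall>y. f y - f x \<ge> ereal (blinfun_apply xs (y - x) - e))}"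

text \<open>epsilon-subdifferential of f* at x*, taken as a subset of X.\<close>
definition eps_subdiff_conj :: "('a::real_normed_vector \<Rightarrow> ereal) \<Rightarrow> real \<Rightarrow> ('a \<Rightarrow>\<^sub>L real) \<Rightarrow> 'a set" where
  "eps_subdiff_conj f e xs = {y. fconj f xs \<noteq> \<infinity> \<and> fconj f xs \<noteq> -\<infinity> \<and>
      (\<forall>zs. fconj f zs - fconj f xs \<ge> ereal (blinfun_apply (zs - xs) y - e))}"

definition subdiff_graph :: "('a::real_normed_vector \<Rightarrow> ereal) \<Rightarrow> ('a \<times> ('a \<Rightarrow>\<^sub>L real)) set" where
  "subdiff_graph f = {(y, ys). ys \<in> eps_subdiff f 0 y}"

definition eps_subdiff_sum :: "('a::real_normed_vector \<Rightarrow> ereal) \<Rightarrow> real \<Rightarrow> 'a \<Rightarrow> ('a \<Rightarrow>\<^sub>L real)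
      \<Rightarrow> ('a \<times> ('a \<Rightarrow>\<^sub>L real)) set" where
  "eps_subdiff_sum f e x xs = {(y, ys). \<exists>a b. a \<ge> 0 \<and> b \<ge> 0 \<and> a + b \<le> e \<and>
      ys \<in> eps_subdiff f a x \<and> y \<in> eps_subdiff_conj f b xs}"

definition K_fun :: "('a::real_normed_vector \<Rightarrow> ereal) \<Rightarrow> 'a \<Rightarrow> ('a \<Rightarrow>\<^sub>L real) \<Rightarrow> ereal" where
  "K_fun f x xs = Inf (ereal ` {e. e \<ge> 0 \<and> subdiff_graph f \<inter> eps_subdiff_sum f e x xs \<noteq> {}})"

definition F_fun :: "('a::real_normed_vector \<Rightarrow> ereal) \<Rightarrow> 'a \<Rightarrow> ('a \<Rightarrow>\<^sub>L real) \<Rightarrow> ereal" where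
  "F_fun f x xs = (SUP p\<in>subdiff_graph f. ereal (blinfun_apply xs (fst p) + blinfun_apply (snd p) x
      - blinfun_apply (snd p) (fst p)))"

end

theory Submission
  imports Defs
begin

text \<open>For \<open>(y, ys)\<close> in the graph of \<open>\<partial>f\<close>, the subgradient inequality at \<open>w\<close> and the
  Fenchel--Young inequality at \<open>(y, vs)\<close> show that \<open>ys \<in> \<partial>\<^sub>a f(w)\<close> and \<open>y \<in> \<partial>\<^sub>b f\<^sup>*(vs)\<close>
  with \<open>a + b = f(w) + f\<^sup>*(vs) - (\<langle>y, vs\<rangle> + \<langle>w, ys\<rangle> - \<langle>y, ys\<rangle>)\<close>; conversely, since
  \<open>f\<^sup>*(ys) = \<langle>y, ys\<rangle> - f(y)\<close> on the graph, membership of \<open>(y, ys)\<close> in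
  \<open>\<partial>\<^sub>\<epsilon>(f\<^sup>* \<oplus> f)(w, vs)\<close> bounds that gap by \<open>\<epsilon>\<close>. So \<open>K = f(w) + f\<^sup>*(vs) - F\<close>, provided the
  graph of \<open>\<partial>f\<close> is nonempty. Nonemptiness is the Brondsted--Rockafellar argument:
  Ekeland's principle applied to \<open>f - vs\<close> yields a point \<open>y\<close> at which \<open>f - vs + \<parallel>\<cdot> - y\<parallel>\<close> is
  minimal, and the Hahn--Banach theorem gives a linear minorant of the infimal convolution of the
  directional derivative of \<open>f - vs\<close> at \<open>y\<close> with the norm, which is a subgradient.\<close>

section \<open>Sublinear functionals and the Hahn--Banach theorem\<close>

definition sublinear :: "('a::real_vector \<Rightarrow> real) \<Rightarrow> bool" where
  "sublinear p \<longleftrightarrow> (\<forall>x y. p (x + y) \<le> p x + p y) \<and> (\<forall>c x. 0 < c \<longrightarrow> p (c *\<^sub>R x) = c * p x)"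

lemma sublinearI:
  fixes p :: "'a::real_vector \<Rightarrow> real"
  assumes add: "\<And>x y. p (x + y) \<le> p x + p y"
    and scale: "\<And>c x. 0 < c \<Longrightarrow> p (c *\<^sub>R x) \<le> c * p x"
  shows "sublinear p"
proof -
  have "p (c *\<^sub>R x) = c * p x" if c: "0 < c" for c x
  proof -
    have "p x = p (inverse c *\<^sub>R (c *\<^sub>R x))" using c by simp
    also have "\<dots> \<le> inverse c * p (c *\<^sub>R x)" using scale[of "inverse c" "c *\<^sub>R x"] c by simp
    finally have "c * p x \<le> p (c *\<^sub>R x)" using c by (simp add: field_simps)
    with scale[OF c, of x] show ?thesis by linarith
  qed
  with add show ?thesis unfolding sublinear_def by blast
qed

lemma sublinear_add_le: "sublinear p \<Longrightarrow> p (x + y) \<le> p x + p y"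
  unfolding sublinear_def by blast

lemma sublinear_scale: "sublinear p \<Longrightarrow> 0 < c \<Longrightarrow> p (c *\<^sub>R x) = c * p x"
  unfolding sublinear_def by blast

lemma sublinear_zero: "sublinear p \<Longrightarrow> p 0 = 0"
  using sublinear_scale[of p 2 0] by simp

lemma sublinear_scale_nonneg: "sublinear p \<Longrightarrow> 0 \<le> c \<Longrightarrow> p (c *\<^sub>R x) = c * p x"
  by (cases "c = 0") (simp_all add: sublinear_zero sublinear_scale)

lemma sublinear_minus_le: "sublinear p \<Longrightarrow> - p (- x) \<le> p x"
  using sublinear_add_le[of p x "- x"] sublinear_zero[of p] by simp

lemma bdd_below_sublinear_minorants:
  fixes q :: "'a::real_vector \<Rightarrow> real"
  assumes "\<And>p. p \<in> C \<Longrightarrow> sublinear p \<and> p \<le> q"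
  shows "bdd_below ((\<lambda>p. p x) ` C)"
proof (rule bdd_belowI2)
  fix p assume "p \<in> C"
  with assms have "- q (- x) \<le> - p (- x)" "- p (- x) \<le> p x"
    using sublinear_minus_le by (auto simp: le_fun_def)
  then show "- q (- x) \<le> p x" by linarith
qed

lemma sublinear_INF_chain:
  fixes q :: "'a::real_vector \<Rightarrow> real"
  assumes "C \<noteq> {}" and sub: "\<And>p. p \<in> C \<Longrightarrow> sublinear p \<and> p \<le> q"
    and chain: "\<And>p p'. p \<in> C \<Longrightarrow> p' \<in> C \<Longrightarrow> p \<le> p' \<or> p' \<le> p"
  shows "sublinear (\<lambda>x. INF p\<in>C. p x)" (is "sublinear ?m")
proof (rule sublinearI)
  have bdd: "bdd_below ((\<lambda>p. p x) ` C)" for x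
    using sub by (rule bdd_below_sublinear_minorants)
  have lower: "?m x \<le> p x" if "p \<in> C" for p x
    using bdd that by (rule cINF_lower)
  have greatest: "a \<le> ?m x" if "\<And>p. p \<in> C \<Longrightarrow> a \<le> p x" for a x
    using \<open>C \<noteq> {}\<close> that by (rule cINF_greatest)
  show "?m (c *\<^sub>R x) \<le> c * ?m x" if c: "0 < c" for c x
  proof -
    have "?m (c *\<^sub>R x) / c \<le> ?m x"
    proof (rule greatest)
      fix p assume p: "p \<in> C"
      have "?m (c *\<^sub>R x) \<le> c * p x"
        using lower[OF p, of "c *\<^sub>R x"] sublinear_scale[of p c x] sub[OF p] c by simp
      then show "?m (c *\<^sub>R x) / c \<le> p x" using c by (simp add: field_simps)
    qed
    then show ?thesis using c by (simp add: field_simps)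
  qed
  show "?m (x + y) \<le> ?m x + ?m y" for x y
  proof -
    have "?m (x + y) - ?m y \<le> ?m x"
    proof (rule greatest)
      fix p1 assume p1: "p1 \<in> C"
      have "?m (x + y) - p1 x \<le> ?m y"
      proof (rule greatest)
        fix p2 assume p2: "p2 \<in> C"
        obtain p where p: "p \<in> C" "p \<le> p1" "p \<le> p2"
          using chain[OF p1 p2] p1 p2 by auto
        have "?m (x + y) \<le> p x + p y"
          using lower[OF p(1), of "x + y"] sublinear_add_le[of p x y] sub[OF p(1)] by linarith
        also have "\<dots> \<le> p1 x + p2 y" using p by (simp add: add_mono le_funD)
        finally show "?m (x + y) - p1 x \<le> p2 y" by simp
      qed
      then show "?m (x + y) - ?m y \<le> p1 x" by simp
    qed
    then show ?thesis by simp
  qed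
qed

lemma INF_ray_le:
  fixes m :: "'a::real_vector \<Rightarrow> real"
  assumes m: "sublinear m" and t: "0 \<le> t"
  shows "(INF s\<in>{0..}. m (x + s *\<^sub>R z) - s * m z) \<le> m (x + t *\<^sub>R z) - t * m z"
proof (rule cINF_lower)
  show "bdd_below ((\<lambda>s. m (x + s *\<^sub>R z) - s * m z) ` {0..})"
  proof (rule bdd_belowI2)
    fix s :: real assume "s \<in> {0..}"
    then have "m (s *\<^sub>R z) = s * m z" using m by (simp add: sublinear_scale_nonneg)
    moreover have "m (s *\<^sub>R z) \<le> m (x + s *\<^sub>R z) + m (- x)"
      using sublinear_add_le[OF m, of "x + s *\<^sub>R z" "- x"] by simp
    ultimately show "- m (- x) \<le> m (x + s *\<^sub>R z) - s * m z" by simp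
  qed
qed (use t in simp)

lemma sublinear_INF_ray:
  fixes m :: "'a::real_vector \<Rightarrow> real"
  assumes m: "sublinear m"
  shows "sublinear (\<lambda>x. INF t\<in>{0..}. m (x + t *\<^sub>R z) - t * m z)" (is "sublinear ?p")
proof (rule sublinearI)
  have greatest: "a \<le> ?p x" if "\<And>t. 0 \<le> t \<Longrightarrow> a \<le> m (x + t *\<^sub>R z) - t * m z" for a x
    using that by (intro cINF_greatest) auto
  show "?p (c *\<^sub>R x) \<le> c * ?p x" if c: "0 < c" for c x
  proof -
    have "?p (c *\<^sub>R x) / c \<le> ?p x"
    proof (rule greatest)
      fix t :: real assume t: "0 \<le> t"
      have "?p (c *\<^sub>R x) \<le> m (c *\<^sub>R x + (c * t) *\<^sub>R z) - (c * t) * m z"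
        using INF_ray_le[OF m, of "c * t"] c t by simp
      also have "m (c *\<^sub>R x + (c * t) *\<^sub>R z) = c * m (x + t *\<^sub>R z)"
        using sublinear_scale[OF m c, of "x + t *\<^sub>R z"] by (simp add: scaleR_add_right)
      finally show "?p (c *\<^sub>R x) / c \<le> m (x + t *\<^sub>R z) - t * m z"
        using c by (simp add: field_simps)
    qed
    then show ?thesis using c by (simp add: field_simps)
  qed
  show "?p (x + y) \<le> ?p x + ?p y" for x y
  proof -
    have "?p (x + y) - ?p y \<le> ?p x"
    proof (rule greatest)
      fix t1 :: real assume t1: "0 \<le> t1"
      have "?p (x + y) - (m (x + t1 *\<^sub>R z) - t1 * m z) \<le> ?p y"
      proof (rule greatest)
        fix t2 :: real assume t2: "0 \<le> t2"
        have "?p (x + y) \<le> m ((x + t1 *\<^sub>R z) + (y + t2 *\<^sub>R z)) - (t1 + t2) * m z"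
          using INF_ray_le[OF m, of "t1 + t2" "x + y"] t1 t2 by (simp add: algebra_simps)
        then show "?p (x + y) - (m (x + t1 *\<^sub>R z) - t1 * m z) \<le> m (y + t2 *\<^sub>R z) - t2 * m z"
          using sublinear_add_le[OF m, of "x + t1 *\<^sub>R z" "y + t2 *\<^sub>R z"]
          by (simp add: algebra_simps)
      qed
      then show "?p (x + y) - ?p y \<le> m (x + t1 *\<^sub>R z) - t1 * m z" by simp
    qed
    then show ?thesis by simp
  qed
qed

lemma minimal_sublinear_imp_linear:
  fixes m :: "'a::real_vector \<Rightarrow> real"
  assumes m: "sublinear m" and minimal: "\<And>p. sublinear p \<Longrightarrow> p \<le> m \<Longrightarrow> p = m"
  shows "linear m"
proof -
  have super: "m x + m z \<le> m (x + z)" for x z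
  proof -
    have "(\<lambda>x. INF t\<in>{0..}. m (x + t *\<^sub>R z) - t * m z) \<le> m"
      using INF_ray_le[OF m order.refl] by (simp add: le_fun_def)
    with sublinear_INF_ray[OF m] have "(\<lambda>x. INF t\<in>{0..}. m (x + t *\<^sub>R z) - t * m z) = m"
      by (rule minimal)
    then show ?thesis using INF_ray_le[OF m, of 1 x z] by (simp add: fun_eq_iff)
  qed
  have add: "m (x + y) = m x + m y" for x y
    using super[of x y] sublinear_add_le[OF m, of x y] by simp
  have minus: "m (- x) = - m x" for x
    using add[of x "- x"] sublinear_zero[OF m] by simp
  have "m (c *\<^sub>R x) = c * m x" for c x
  proof (cases "0 \<le> c")
    case True then show ?thesis using m by (simp add: sublinear_scale_nonneg)
  next
    case False
    then have "m (c *\<^sub>R x) = m ((- c) *\<^sub>R (- x))" by simp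
    also have "\<dots> = - c * m (- x)" using False m by (intro sublinear_scale_nonneg) auto
    also have "\<dots> = c * m x" by (simp add: minus)
    finally show ?thesis .
  qed
  with add show ?thesis by (intro linearI) simp_all
qed

lemma sublinear_linear_minorant:
  fixes q :: "'a::real_vector \<Rightarrow> real"
  assumes "sublinear q"
  obtains L where "linear L" "L \<le> q"
proof -
  define A where "A = {p. sublinear p \<and> p \<le> q}"
  let ?below = "\<lambda>p p'. p' \<le> p"
  have "partial_order_on A (relation_of ?below A)"
    by (rule partial_order_on_relation_ofI) auto
  moreover have "\<exists>u\<in>A. \<forall>p\<in>C. ?below p u" if C: "C \<in> Chains (relation_of ?below A)" for C
  proof (cases "C = {}")
    case True
    then show ?thesis using assms by (auto simp: A_def)
  next
    case False
    have sub: "sublinear p \<and> p \<le> q" if "p \<in> C" for p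
      using Chains_relation_of[OF C] that by (auto simp: A_def)
    have chain: "p \<le> p' \<or> p' \<le> p" if "p \<in> C" "p' \<in> C" for p p'
      using C that unfolding Chains_def relation_of_def by auto
    let ?m = "\<lambda>x. INF p\<in>C. p x"
    have lower: "?m \<le> p" if "p \<in> C" for p
      using bdd_below_sublinear_minorants[OF sub] that by (auto simp: le_fun_def intro: cINF_lower)
    obtain p0 where "p0 \<in> C" using False by blast
    then have "?m \<le> p0" "p0 \<le> q" using lower sub by auto
    then have "?m \<le> q" by (rule order.trans)
    moreover have "sublinear ?m" using False sub chain by (rule sublinear_INF_chain)
    ultimately show ?thesis using lower by (auto simp: A_def)
  qed
  ultimately have "\<exists>m\<in>A. \<forall>p\<in>A. p \<le> m \<longrightarrow> p = m"
    by (rule predicate_Zorn)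
  then obtain m where "m \<in> A" and minimal: "\<And>p. p \<in> A \<Longrightarrow> p \<le> m \<Longrightarrow> p = m"
    by blast
  then have m: "sublinear m" "m \<le> q" by (auto simp: A_def)
  have "linear m"
  proof (rule minimal_sublinear_imp_linear[OF m(1)])
    fix p assume "sublinear p" "p \<le> m"
    moreover have "p \<le> q" using \<open>p \<le> m\<close> m(2) by (rule order.trans)
    ultimately show "p = m" by (intro minimal) (auto simp: A_def)
  qed
  then show ?thesis using m(2) by (rule that)
qed

lemma sublinear_bounded_linear_minorant:
  fixes q :: "'a::real_normed_vector \<Rightarrow> real"
  assumes "sublinear q" and bound: "\<And>x. q x \<le> K * norm x"
  obtains L where "bounded_linear L" "L \<le> q"
proof -
  obtain L where L: "linear L" "L \<le> q"
    using assms(1) by (rule sublinear_linear_minorant)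
  have "norm (L x) \<le> norm x * K" for x
  proof -
    have "L x \<le> K * norm x" "L (- x) \<le> K * norm x"
      using le_funD[OF L(2)] bound[of x] bound[of "- x"] by (auto intro: order.trans)
    moreover have "L (- x) = - L x" using L(1) by (rule linear_neg)
    ultimately show ?thesis by (simp add: abs_le_iff mult.commute)
  qed
  with L(1) have "bounded_linear L"
    by (intro bounded_linear_intro[where K = K]) (simp_all add: linear_iff)
  then show ?thesis using L(2) by (rule that)
qed

section \<open>Subgradients of calm convex functions\<close>

locale convex_calm =
  fixes g :: "'a::real_normed_vector \<Rightarrow> real" and D :: "'a set" and y :: 'a
  assumes convex: "convex_on D g" and in_dom: "y \<in> D"
    and calm: "\<And>z. z \<in> D \<Longrightarrow> g y \<le> g z + norm (z - y)"
begin

definition slope :: "real \<Rightarrow> 'a \<Rightarrow> real" where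
  "slope t u = (g (y + t *\<^sub>R u) - g y) / t"

definition envelope :: "'a \<Rightarrow> real" where
  "envelope h = (INF (t, u)\<in>{(t, u). 0 < t \<and> y + t *\<^sub>R u \<in> D}. slope t u + norm (h - u))"

lemma slope_ge:
  assumes "0 < t" "y + t *\<^sub>R u \<in> D"
  shows "- norm u \<le> slope t u"
proof -
  have "g y \<le> g (y + t *\<^sub>R u) + t * norm u" using calm[OF assms(2)] assms(1) by simp
  then show ?thesis using assms(1) by (simp add: slope_def field_simps)
qed

lemma envelope_le:
  assumes "0 < t" "y + t *\<^sub>R u \<in> D"
  shows "envelope h \<le> slope t u + norm (h - u)"
proof -
  have "- norm h \<le> slope t u + norm (h - u)"
    if "0 < t" "y + t *\<^sub>R u \<in> D" for t u
    using slope_ge[OF that] norm_triangle_ineq4[of h "h - u"] by simp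
  then have "bdd_below ((\<lambda>(t, u). slope t u + norm (h - u)) ` {(t, u). 0 < t \<and> y + t *\<^sub>R u \<in> D})"
    by (intro bdd_belowI2) auto
  moreover have "(t, u) \<in> {(t, u). 0 < t \<and> y + t *\<^sub>R u \<in> D}" using assms by simp
  ultimately show ?thesis
    unfolding envelope_def by (rule cINF_lower2) simp
qed

lemma envelope_greatest:
  assumes "\<And>t u. 0 < t \<Longrightarrow> y + t *\<^sub>R u \<in> D \<Longrightarrow> a \<le> slope t u + norm (h - u)"
  shows "a \<le> envelope h"
proof -
  have "(1, 0) \<in> {(t, u). 0 < t \<and> y + t *\<^sub>R u \<in> D}" using in_dom by simp
  then show ?thesis
    unfolding envelope_def by (rule cINF_greatest[OF ex_in_conv[THEN iffD1, OF exI]]) (auto intro: assms)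
qed

lemma envelope_le_norm: "envelope h \<le> norm h"
  using envelope_le[of 1 0 h] in_dom by (simp add: slope_def)

lemma envelope_le_diff: "z \<in> D \<Longrightarrow> envelope (z - y) \<le> g z - g y"
  using envelope_le[of 1 "z - y" "z - y"] by (simp add: slope_def)

lemma slope_scale: "0 < c \<Longrightarrow> slope (t / c) (c *\<^sub>R u) = c * slope t u"
  by (simp add: slope_def field_simps)

lemma slope_add_le:
  assumes t1: "0 < t1" and t2: "0 < t2"
    and D1: "y + t1 *\<^sub>R u1 \<in> D" and D2: "y + t2 *\<^sub>R u2 \<in> D"
  defines "t \<equiv> t1 * t2 / (t1 + t2)"
  shows "y + t *\<^sub>R (u1 + u2) \<in> D" and "slope t (u1 + u2) \<le> slope t1 u1 + slope t2 u2"
proof -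
  define s where "s = t1 / (t1 + t2)"
  have s: "0 \<le> s" "s \<le> 1" and ts: "(1 - s) * t1 = t" "s * t2 = t" and t: "0 < t"
    using t1 t2 by (auto simp: s_def t_def field_simps)
  have comb: "(1 - s) *\<^sub>R (y + t1 *\<^sub>R u1) + s *\<^sub>R (y + t2 *\<^sub>R u2) = y + t *\<^sub>R (u1 + u2)"
  proof -
    have "(1 - s) *\<^sub>R (y + t1 *\<^sub>R u1) + s *\<^sub>R (y + t2 *\<^sub>R u2)
        = y + ((1 - s) * t1) *\<^sub>R u1 + (s * t2) *\<^sub>R u2"
      by (simp add: algebra_simps)
    then show ?thesis by (simp add: ts scaleR_add_right)
  qed
  have "convex D" using convex by (simp add: convex_on_def)
  from convexD_alt[OF this D1 D2 s] show "y + t *\<^sub>R (u1 + u2) \<in> D" by (simp only: comb)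
  have "g (y + t *\<^sub>R (u1 + u2)) \<le> (1 - s) * g (y + t1 *\<^sub>R u1) + s * g (y + t2 *\<^sub>R u2)"
    using convex_onD[OF convex s D1 D2] by (simp only: comb)
  then have "g (y + t *\<^sub>R (u1 + u2)) - g y
      \<le> (1 - s) * (g (y + t1 *\<^sub>R u1) - g y) + s * (g (y + t2 *\<^sub>R u2) - g y)"
    by (simp add: algebra_simps)
  also have "\<dots> = t * (slope t1 u1 + slope t2 u2)"
  proof -
    have "t * slope t1 u1 = (1 - s) * (g (y + t1 *\<^sub>R u1) - g y)"
      unfolding slope_def ts(1)[symmetric] using t1 by simp
    moreover have "t * slope t2 u2 = s * (g (y + t2 *\<^sub>R u2) - g y)"
      unfolding slope_def ts(2)[symmetric] using t2 by simp
    ultimately show ?thesis by (simp add: distrib_left)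
  qed
  finally show "slope t (u1 + u2) \<le> slope t1 u1 + slope t2 u2"
    using t by (simp add: slope_def field_simps)
qed

lemma envelope_scale_le:
  assumes c: "0 < c"
  shows "envelope (c *\<^sub>R h) \<le> c * envelope h"
proof -
  have "envelope (c *\<^sub>R h) / c \<le> envelope h"
  proof (rule envelope_greatest)
    fix t u assume t: "0 < t" and D: "y + t *\<^sub>R u \<in> D"
    have "y + (t / c) *\<^sub>R (c *\<^sub>R u) \<in> D" using D c by simp
    then have "envelope (c *\<^sub>R h) \<le> slope (t / c) (c *\<^sub>R u) + norm (c *\<^sub>R h - c *\<^sub>R u)"
      using t c by (intro envelope_le) auto
    also have "\<dots> = c * (slope t u + norm (h - u))"
      using c by (simp add: slope_scale distrib_left flip: scaleR_diff_right)
    finally show "envelope (c *\<^sub>R h) / c \<le> slope t u + norm (h - u)"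
      using c by (simp add: field_simps)
  qed
  then show ?thesis using c by (simp add: field_simps)
qed

lemma envelope_add_le: "envelope (h1 + h2) \<le> envelope h1 + envelope h2"
proof -
  have "envelope (h1 + h2) - envelope h2 \<le> envelope h1"
  proof (rule envelope_greatest)
    fix t1 u1 assume t1: "0 < t1" and D1: "y + t1 *\<^sub>R u1 \<in> D"
    have "envelope (h1 + h2) - (slope t1 u1 + norm (h1 - u1)) \<le> envelope h2"
    proof (rule envelope_greatest)
      fix t2 u2 assume t2: "0 < t2" and D2: "y + t2 *\<^sub>R u2 \<in> D"
      have "envelope (h1 + h2)
          \<le> slope (t1 * t2 / (t1 + t2)) (u1 + u2) + norm (h1 + h2 - (u1 + u2))"
        using t1 t2 slope_add_le(1)[OF t1 t2 D1 D2] by (intro envelope_le) auto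
      also have "\<dots> \<le> (slope t1 u1 + norm (h1 - u1)) + (slope t2 u2 + norm (h2 - u2))"
        using slope_add_le(2)[OF t1 t2 D1 D2] norm_triangle_ineq[of "h1 - u1" "h2 - u2"]
        by (simp add: algebra_simps)
      finally show "envelope (h1 + h2) - (slope t1 u1 + norm (h1 - u1)) \<le> slope t2 u2 + norm (h2 - u2)"
        by simp
    qed
    then show "envelope (h1 + h2) - envelope h2 \<le> slope t1 u1 + norm (h1 - u1)" by simp
  qed
  then show ?thesis by simp
qed

lemma bounded_subgradient:
  obtains L where "bounded_linear L" "\<And>z. z \<in> D \<Longrightarrow> L (z - y) \<le> g z - g y"
proof -
  have "sublinear envelope"
    using envelope_add_le envelope_scale_le by (rule sublinearI)
  then obtain L where L: "bounded_linear L" "L \<le> envelope"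
    by (rule sublinear_bounded_linear_minorant[where K = 1]) (simp add: envelope_le_norm)
  have "L (z - y) \<le> g z - g y" if "z \<in> D" for z
    using le_funD[OF L(2), of "z - y"] envelope_le_diff[OF that] by linarith
  with L(1) show ?thesis by (rule that)
qed

end

section \<open>Ekeland's variational principle\<close>

lemma lsc_fun_tendsto_le:
  fixes f :: "'a::topological_space \<Rightarrow> ereal"
  assumes lsc: "lsc_fun f" and F: "F \<noteq> bot" and zs: "(zs \<longlongrightarrow> z) F" and r: "(r \<longlongrightarrow> \<rho>) F"
    and le: "eventually (\<lambda>n. f (zs n) \<le> ereal (r n)) F"
  shows "f z \<le> ereal \<rho>"
proof (rule ereal_le_epsilon2)
  fix e :: real assume "0 < e"
  then have "eventually (\<lambda>n. r n < \<rho> + e) F" using r by (intro order_tendstoD(2)) auto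
  with le have "eventually (\<lambda>n. zs n \<in> {x. f x \<le> ereal (\<rho> + e)}) F"
    by eventually_elim (auto elim: order.trans)
  moreover have "closed {x. f x \<le> ereal (\<rho> + e)}" using lsc by (simp add: lsc_fun_def)
  ultimately have "z \<in> {x. f x \<le> ereal (\<rho> + e)}" using Lim_in_closed_set F zs by blast
  then show "f z \<le> ereal \<rho> + ereal e" by simp
qed

lemma lsc_fun_add_continuous:
  fixes f :: "'a::first_countable_topology \<Rightarrow> ereal"
  assumes lsc: "lsc_fun f" and h: "continuous_on UNIV h"
  shows "lsc_fun (\<lambda>x. f x + ereal (h x))"
  unfolding lsc_fun_def closed_sequential_limits
proof (intro allI impI, elim conjE)
  fix c :: real and xs l
  assume mem: "\<forall>n. xs n \<in> {x. f x + ereal (h x) \<le> ereal c}" and xs: "xs \<longlonglongrightarrow> l"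
  have "f (xs n) \<le> ereal (c - h (xs n))" for n
    using mem[rule_format, of n] by (cases "f (xs n)") auto
  moreover have "(\<lambda>n. c - h (xs n)) \<longlonglongrightarrow> c - h l"
    using continuous_on_tendsto_compose[OF h xs] by (intro tendsto_intros) auto
  ultimately have "f l \<le> ereal (c - h l)"
    using lsc_fun_tendsto_le[OF lsc _ xs] by (simp add: always_eventually)
  then show "l \<in> {x. f x + ereal (h x) \<le> ereal c}"
    by (cases "f l") auto
qed

definition ekeland_set :: "('a::metric_space \<Rightarrow> ereal) \<Rightarrow> 'a \<Rightarrow> 'a set" where
  "ekeland_set \<phi> x = {z. \<phi> z + ereal (dist z x) \<le> \<phi> x}"

lemma ekeland_set_refl: "x \<in> ekeland_set \<phi> x"
  by (simp add: ekeland_set_def)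

lemma ekeland_set_trans:
  assumes "z \<in> ekeland_set \<phi> x'" and "x' \<in> ekeland_set \<phi> x"
  shows "z \<in> ekeland_set \<phi> x"
proof -
  have "\<phi> z + ereal (dist z x) \<le> \<phi> z + ereal (dist z x' + dist x' x)"
    using dist_triangle[of z x x'] by (intro add_left_mono) simp
  also have "\<dots> = \<phi> z + ereal (dist z x') + ereal (dist x' x)"
    by (simp add: add.assoc)
  also have "\<dots> \<le> \<phi> x' + ereal (dist x' x)"
    using assms(1) by (intro add_right_mono) (simp add: ekeland_set_def)
  also have "\<dots> \<le> \<phi> x" using assms(2) by (simp add: ekeland_set_def)
  finally show ?thesis by (simp add: ekeland_set_def)
qed

lemma ekeland_set_finite:
  assumes "z \<in> ekeland_set \<phi> x" and "\<phi> x \<noteq> \<infinity>"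
  shows "\<phi> z \<noteq> \<infinity>"
  using assms by (auto simp: ekeland_set_def)

lemma closed_ekeland_set:
  assumes "lsc_fun \<phi>" and "\<phi> x \<noteq> -\<infinity>"
  shows "closed (ekeland_set \<phi> x)"
proof (cases "\<phi> x")
  case (real c)
  have "lsc_fun (\<lambda>z. \<phi> z + ereal (dist z x))"
    using assms(1) by (rule lsc_fun_add_continuous) (intro continuous_intros)
  then show ?thesis by (simp add: ekeland_set_def real lsc_fun_def)
qed (use assms in \<open>simp_all add: ekeland_set_def\<close>)

lemma ekeland_set_dist_le:
  assumes x': "x' \<in> ekeland_set \<phi> x" and almost_min: "\<phi> x' \<le> (INF u\<in>ekeland_set \<phi> x. \<phi> u) + ereal e"
    and z: "z \<in> ekeland_set \<phi> x'" and fin: "\<phi> z = ereal r"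
  shows "dist z x' \<le> e"
proof -
  have "(INF u\<in>ekeland_set \<phi> x. \<phi> u) \<le> \<phi> z"
    using ekeland_set_trans[OF z x'] by (rule INF_lower)
  then have "\<phi> z + ereal (dist z x') \<le> \<phi> z + ereal e"
    using z almost_min by (auto simp: ekeland_set_def intro: order.trans add_right_mono)
  then show ?thesis using fin by simp
qed

lemma ekeland_set_almost_min:
  fixes \<phi> :: "'a::metric_space \<Rightarrow> ereal"
  assumes bdd: "\<And>z. ereal m \<le> \<phi> z" and x: "\<phi> x \<noteq> \<infinity>" and e: "0 < e"
  shows "\<exists>z. z \<in> ekeland_set \<phi> x \<and> \<phi> z < (INF u\<in>ekeland_set \<phi> x. \<phi> u) + ereal e"
proof -
  let ?\<mu> = "INF u\<in>ekeland_set \<phi> x. \<phi> u"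
  have "ereal m \<le> ?\<mu>" using bdd by (rule INF_greatest)
  moreover have "?\<mu> \<le> \<phi> x" using ekeland_set_refl by (rule INF_lower)
  ultimately obtain \<mu> where \<mu>: "?\<mu> = ereal \<mu>"
    using x by (cases ?\<mu>) auto
  then have "?\<mu> < ereal (\<mu> + e)" using e by simp
  then obtain z where "z \<in> ekeland_set \<phi> x" "\<phi> z < ereal (\<mu> + e)"
    unfolding INF_less_iff by blast
  with \<mu> show ?thesis by auto
qed

lemma ekeland_sequence:
  fixes \<phi> :: "'a::metric_space \<Rightarrow> ereal"
  assumes bdd: "\<And>z. ereal m \<le> \<phi> z" and x0: "\<phi> x0 \<noteq> \<infinity>"
  obtains xs where "xs 0 = x0" and "\<And>n. xs (Suc n) \<in> ekeland_set \<phi> (xs n)"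
    and "\<And>n z. z \<in> ekeland_set \<phi> (xs (Suc n)) \<Longrightarrow> dist z (xs (Suc n)) \<le> (1/2) ^ n"
proof -
  let ?S = "ekeland_set \<phi>"
  define step where
    "step x n = (SOME z. z \<in> ?S x \<and> \<phi> z < (INF u\<in>?S x. \<phi> u) + ereal ((1/2) ^ n))" for x n
  have step: "step x n \<in> ?S x \<and> \<phi> (step x n) < (INF u\<in>?S x. \<phi> u) + ereal ((1/2) ^ n)"
    if "\<phi> x \<noteq> \<infinity>" for x n
    unfolding step_def using ekeland_set_almost_min[of m \<phi>, OF bdd that] by (rule someI_ex) simp
  define xs where "xs = rec_nat x0 (\<lambda>n x. step x n)"
  have xs_Suc: "xs (Suc n) = step (xs n) n" for n
    by (simp add: xs_def)
  have fin: "\<phi> (xs n) \<noteq> \<infinity>" for n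
  proof (induction n)
    case 0 then show ?case using x0 by (simp add: xs_def)
  next
    case (Suc n) then show ?case using step[OF Suc] ekeland_set_finite by (auto simp: xs_Suc)
  qed
  show ?thesis
  proof (rule that)
    show "xs 0 = x0" by (simp add: xs_def)
    show nested: "xs (Suc n) \<in> ?S (xs n)" for n
      using step[OF fin[of n]] by (simp add: xs_Suc)
    show "dist z (xs (Suc n)) \<le> (1/2) ^ n" if z: "z \<in> ?S (xs (Suc n))" for n z
    proof -
      have "\<phi> z \<noteq> \<infinity>" using z fin by (rule ekeland_set_finite)
      moreover have "\<phi> z \<noteq> -\<infinity>" using bdd[of z] by auto
      ultimately obtain r where "\<phi> z = ereal r" by (cases "\<phi> z") auto
      moreover have "\<phi> (xs (Suc n)) \<le> (INF u\<in>?S (xs n). \<phi> u) + ereal ((1/2) ^ n)"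
        using step[OF fin[of n]] by (simp add: xs_Suc less_imp_le)
      ultimately show ?thesis using ekeland_set_dist_le[OF nested _ z] by blast
    qed
  qed
qed

lemma ekeland_variational_principle:
  fixes \<phi> :: "'a::complete_space \<Rightarrow> ereal"
  assumes lsc: "lsc_fun \<phi>" and bdd: "\<And>z. ereal m \<le> \<phi> z" and x0: "\<phi> x0 \<noteq> \<infinity>"
  obtains y where "\<phi> y \<noteq> \<infinity>" and "\<And>z. \<phi> y \<le> \<phi> z + ereal (dist z y)"
proof -
  let ?S = "ekeland_set \<phi>"
  obtain xs where xs0: "xs 0 = x0" and nested: "\<And>n. xs (Suc n) \<in> ?S (xs n)"
    and small: "\<And>n z. z \<in> ?S (xs (Suc n)) \<Longrightarrow> dist z (xs (Suc n)) \<le> (1/2) ^ n"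
    using ekeland_sequence[of m \<phi> x0] bdd x0 by blast
  have decreasing: "?S (xs n) \<subseteq> ?S (xs k)" if "k \<le> n" for k n
    using that
  proof (induction n rule: dec_induct)
    case (step n) then show ?case using ekeland_set_trans[OF _ nested[of n]] by blast
  qed simp
  have "\<exists>y. \<Inter>(range (\<lambda>n. ?S (xs n))) = {y}"
  proof (rule decreasing_closed_nest_sing)
    show "closed (?S (xs n))" for n
      using lsc bdd[of "xs n"] by (intro closed_ekeland_set) auto
    show "?S (xs n) \<noteq> {}" for n
      using ekeland_set_refl by blast
    show "?S (xs n) \<subseteq> ?S (xs k)" if "k \<le> n" for k n
      using that by (rule decreasing)
    show "\<exists>n. \<forall>a\<in>?S (xs n). \<forall>b\<in>?S (xs n). dist a b < \<epsilon>" if \<epsilon>: "0 < \<epsilon>" for \<epsilon>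
    proof -
      obtain N where N: "(1/2::real) ^ N < \<epsilon> / 2"
        using real_arch_pow_inv[of "\<epsilon> / 2" "1/2"] \<epsilon> by auto
      have "dist a b < \<epsilon>" if "a \<in> ?S (xs (Suc N))" "b \<in> ?S (xs (Suc N))" for a b
        using small[OF that(1)] small[OF that(2)] dist_triangle2[of a b "xs (Suc N)"] N by linarith
      then show ?thesis by blast
    qed
  qed
  then obtain y where y: "\<Inter>(range (\<lambda>n. ?S (xs n))) = {y}" by blast
  then have y_in: "y \<in> ?S (xs n)" for n by blast
  show ?thesis
  proof (rule that)
    show "\<phi> y \<noteq> \<infinity>" using y_in[of 0] x0 by (simp add: xs0 ekeland_set_finite)
    show "\<phi> y \<le> \<phi> z + ereal (dist z y)" for z
    proof (rule ccontr)
      assume not_le: "\<not> \<phi> y \<le> \<phi> z + ereal (dist z y)"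
      then have "z \<in> ?S y" by (simp add: ekeland_set_def)
      then have "z \<in> \<Inter>(range (\<lambda>n. ?S (xs n)))" using ekeland_set_trans y_in by blast
      then have "z = y" using y by blast
      with not_le show False by simp
    qed
  qed
qed

section \<open>Conjugates and approximate subdifferentials\<close>

lemma fconj_ge: "ereal (blinfun_apply xs x) - f x \<le> fconj f xs"
  unfolding fconj_def by (rule SUP_upper) simp

lemma fconj_neq_MInf:
  assumes "proper_fun f"
  shows "fconj f xs \<noteq> -\<infinity>"
proof -
  obtain x where "f x \<noteq> \<infinity>" using assms by (auto simp: proper_fun_def)
  then have "ereal (blinfun_apply xs x) - f x \<noteq> -\<infinity>" by (cases "f x") auto
  then show ?thesis using fconj_ge[of xs x f] by auto
qed

lemma finite_ereal_le_diff_iff: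
  fixes a :: ereal
  shows "(a \<noteq> \<infinity> \<and> a \<noteq> -\<infinity> \<and> (\<forall>z. ereal (r z) \<le> b z - a)) \<longleftrightarrow>
    (\<exists>c. a = ereal c \<and> (\<forall>z. ereal (c + r z) \<le> b z))"
proof -
  have "ereal r' \<le> b' - ereal c \<longleftrightarrow> ereal (c + r') \<le> b'" for r' c and b' :: ereal
    by (cases b') auto
  then show ?thesis by (cases a) auto
qed

lemma eps_subdiff_iff:
  "ys \<in> eps_subdiff f e x \<longleftrightarrow>
    (\<exists>c. f x = ereal c \<and> (\<forall>z. ereal (c + (blinfun_apply ys (z - x) - e)) \<le> f z))"
  unfolding eps_subdiff_def
  using finite_ereal_le_diff_iff[of "f x" "\<lambda>z. blinfun_apply ys (z - x) - e" f] by simp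

lemma eps_subdiff_conj_iff:
  "y \<in> eps_subdiff_conj f e xs \<longleftrightarrow>
    (\<exists>c. fconj f xs = ereal c \<and> (\<forall>zs. ereal (c + (blinfun_apply (zs - xs) y - e)) \<le> fconj f zs))"
  unfolding eps_subdiff_conj_def
  using finite_ereal_le_diff_iff[of "fconj f xs" "\<lambda>zs. blinfun_apply (zs - xs) y - e" "fconj f"]
  by simp

lemma subdiff_graph_iff:
  "(y, ys) \<in> subdiff_graph f \<longleftrightarrow>
    (\<exists>c. f y = ereal c \<and> (\<forall>z. ereal (c + blinfun_apply ys (z - y)) \<le> f z))"
  unfolding subdiff_graph_def by (simp add: eps_subdiff_iff)

lemma eps_subdiff_sum_nonneg: "p \<in> eps_subdiff_sum f e x xs \<Longrightarrow> 0 \<le> e"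
  by (auto simp: eps_subdiff_sum_def)

lemma fconj_eq_of_subdiff_graph:
  assumes "(y, ys) \<in> subdiff_graph f"
  shows "fconj f ys = ereal (blinfun_apply ys y) - f y"
proof (rule antisym)
  obtain c where c: "f y = ereal c" and sub: "\<And>z. ereal (c + blinfun_apply ys (z - y)) \<le> f z"
    using assms by (auto simp: subdiff_graph_iff)
  show "fconj f ys \<le> ereal (blinfun_apply ys y) - f y"
    unfolding fconj_def
  proof (rule SUP_least)
    fix z
    have "ereal (blinfun_apply ys z) - f z \<le> ereal (blinfun_apply ys z) - ereal (c + blinfun_apply ys (z - y))"
      using sub[of z] by (rule ereal_minus_mono[OF order.refl])
    then show "ereal (blinfun_apply ys z) - f z \<le> ereal (blinfun_apply ys y) - f y"
      by (simp add: c blinfun.diff_right)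
  qed
qed (rule fconj_ge)

definition fitzpatrick_term :: "'a::real_normed_vector \<Rightarrow> ('a \<Rightarrow>\<^sub>L real) \<Rightarrow> 'a \<times> ('a \<Rightarrow>\<^sub>L real) \<Rightarrow> real" where
  "fitzpatrick_term x xs p = blinfun_apply xs (fst p) + blinfun_apply (snd p) x - blinfun_apply (snd p) (fst p)"

lemma F_fun_eq_SUP: "F_fun f x xs = (SUP p\<in>subdiff_graph f. ereal (fitzpatrick_term x xs p))"
  by (simp add: F_fun_def fitzpatrick_term_def)

lemma subdiff_graph_in_eps_subdiff_sum:
  assumes "p \<in> subdiff_graph f" and a: "f w = ereal a" and b: "fconj f vs = ereal b"
  shows "p \<in> eps_subdiff_sum f (a + b - fitzpatrick_term w vs p) w vs"
proof -
  obtain y ys where p: "p = (y, ys)" by (cases p)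
  obtain c where c: "f y = ereal c" and sub: "\<And>z. ereal (c + blinfun_apply ys (z - y)) \<le> f z"
    using assms(1) by (auto simp: p subdiff_graph_iff)
  \<comment> \<open>the slacks in the subgradient inequality at \<open>w\<close> and in the Fenchel--Young inequality at \<open>(y, vs)\<close>\<close>
  define \<alpha> where "\<alpha> = a - c - blinfun_apply ys (w - y)"
  define \<beta> where "\<beta> = c + b - blinfun_apply vs y"
  have "0 \<le> \<alpha>" using sub[of w] a by (simp add: \<alpha>_def)
  moreover have "0 \<le> \<beta>" using fconj_ge[of vs y f] b c by (simp add: \<beta>_def)
  moreover have "ys \<in> eps_subdiff f \<alpha> w"
    unfolding eps_subdiff_iff
    using a sub by (simp add: \<alpha>_def blinfun.diff_right algebra_simps)
  moreover have "y \<in> eps_subdiff_conj f \<beta> vs"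
    unfolding eps_subdiff_conj_iff
    using b fconj_ge[of _ y f] c by (simp add: \<beta>_def blinfun.diff_left algebra_simps)
  moreover have "\<alpha> + \<beta> = a + b - fitzpatrick_term w vs p"
    by (simp add: \<alpha>_def \<beta>_def p fitzpatrick_term_def blinfun.diff_right)
  ultimately show ?thesis
    unfolding p eps_subdiff_sum_def mem_Collect_eq case_prod_conv
    by (intro exI[of _ \<alpha>] exI[of _ \<beta>]) simp
qed

lemma eps_subdiff_sum_gap_le:
  assumes G: "p \<in> subdiff_graph f" and S: "p \<in> eps_subdiff_sum f e w vs"
    and a: "f w = ereal a" and b: "fconj f vs = ereal b"
  shows "a + b - fitzpatrick_term w vs p \<le> e"
proof -
  obtain y ys where p: "p = (y, ys)" by (cases p)
  obtain c where c: "f y = ereal c"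
    using G by (auto simp: p subdiff_graph_iff)
  obtain \<alpha> \<beta> where "\<alpha> + \<beta> \<le> e" and \<alpha>: "ys \<in> eps_subdiff f \<alpha> w" and \<beta>: "y \<in> eps_subdiff_conj f \<beta> vs"
    using S by (auto simp: p eps_subdiff_sum_def)
  have "ereal (a + (blinfun_apply ys (y - w) - \<alpha>)) \<le> f y"
    using \<alpha> a by (auto simp: eps_subdiff_iff)
  moreover have "ereal (b + (blinfun_apply (ys - vs) y - \<beta>)) \<le> fconj f ys"
    using \<beta> b by (auto simp: eps_subdiff_conj_iff)
  ultimately have "a + (blinfun_apply ys (y - w) - \<alpha>) \<le> c"
    and "b + (blinfun_apply (ys - vs) y - \<beta>) \<le> blinfun_apply ys y - c"
    using c fconj_eq_of_subdiff_graph[OF G[unfolded p]] by simp_all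
  then show ?thesis using \<open>\<alpha> + \<beta> \<le> e\<close>
    by (simp add: p fitzpatrick_term_def blinfun.diff_right blinfun.diff_left)
qed

lemma convex_fun_edom_le:
  assumes proper: "proper_fun f" and convex: "convex_fun f"
    and x: "x \<in> edom f" and y: "y \<in> edom f" and u: "0 \<le> u" "u \<le> 1"
  shows "f ((1 - u) *\<^sub>R x + u *\<^sub>R y) \<le> ereal ((1 - u) * real_of_ereal (f x) + u * real_of_ereal (f y))"
proof -
  obtain a b where a: "f x = ereal a" and b: "f y = ereal b"
    using x y proper by (cases "f x"; cases "f y") (auto simp: edom_def proper_fun_def)
  consider "u = 0" | "u = 1" | "0 < 1 - u" "1 - u < 1" using u by linarith
  then show ?thesis
  proof cases
    case 3
    with convex have "f ((1 - u) *\<^sub>R x + (1 - (1 - u)) *\<^sub>R y) \<le> ereal (1 - u) * f x + ereal (1 - (1 - u)) * f y"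
      unfolding convex_fun_def by blast
    then show ?thesis using a b by simp
  qed (simp_all add: a b)
qed

lemma convex_on_edom:
  assumes "proper_fun f" and "convex_fun f"
  shows "convex_on (edom f) (\<lambda>x. real_of_ereal (f x))"
proof (rule convex_onI)
  show "convex (edom f)"
    unfolding convex_alt
  proof (intro ballI allI impI)
    fix x y and u :: real assume "x \<in> edom f" "y \<in> edom f" "0 \<le> u \<and> u \<le> 1"
    then have "f ((1 - u) *\<^sub>R x + u *\<^sub>R y) \<le> ereal ((1 - u) * real_of_ereal (f x) + u * real_of_ereal (f y))"
      using convex_fun_edom_le[OF assms] by blast
    then have "f ((1 - u) *\<^sub>R x + u *\<^sub>R y) < \<infinity>"
      by (rule le_less_trans) simp
    then show "(1 - u) *\<^sub>R x + u *\<^sub>R y \<in> edom f" by (simp add: edom_def)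
  qed
  show "real_of_ereal (f ((1 - t) *\<^sub>R x + t *\<^sub>R y)) \<le> (1 - t) * real_of_ereal (f x) + t * real_of_ereal (f y)"
    if "0 < t" "t < 1" "x \<in> edom f" "y \<in> edom f" for t x y
  proof -
    have "f ((1 - t) *\<^sub>R x + t *\<^sub>R y) \<noteq> -\<infinity>" using assms(1) by (simp add: proper_fun_def)
    with convex_fun_edom_le[OF assms that(3,4), of t] that(1,2) show ?thesis
      by (cases "f ((1 - t) *\<^sub>R x + t *\<^sub>R y)") auto
  qed
qed

lemma subdiff_graph_at_calm_point:
  fixes f :: "'a::real_normed_vector \<Rightarrow> ereal"
  assumes proper: "proper_fun f" and convex: "convex_fun f" and y: "y \<in> edom f"
    and calm: "\<And>z. f y + ereal (- blinfun_apply vs y) \<le> f z + ereal (- blinfun_apply vs z) + ereal (norm (z - y))"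
  shows "\<exists>ys. (y, ys) \<in> subdiff_graph f"
proof -
  define g where "g z = real_of_ereal (f z) - blinfun_apply vs z" for z
  have fin: "f z = ereal (g z + blinfun_apply vs z)" if "z \<in> edom f" for z
    using that proper by (cases "f z") (auto simp: g_def edom_def proper_fun_def)
  have "convex_calm g (edom f) y"
  proof
    have "convex_on (edom f) (\<lambda>z. - blinfun_apply vs z)"
      using convex_on_edom[OF proper convex] by (simp add: convex_on_def blinfun.bilinear_simps)
    then show "convex_on (edom f) g"
      unfolding g_def using convex_on_add[OF convex_on_edom[OF proper convex]]
      by (simp only: diff_conv_add_uminus)
    show "y \<in> edom f" by (rule y)
    show "g y \<le> g z + norm (z - y)" if "z \<in> edom f" for z
      using calm[of z] fin[OF y] fin[OF that] by simp
  qed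
  then obtain L where L: "bounded_linear L" and sub: "\<And>z. z \<in> edom f \<Longrightarrow> L (z - y) \<le> g z - g y"
    using convex_calm.bounded_subgradient by blast
  have ys: "blinfun_apply (Blinfun L + vs) z = L z + blinfun_apply vs z" for z
    by (simp add: plus_blinfun.rep_eq bounded_linear_Blinfun_apply[OF L])
  have "(y, Blinfun L + vs) \<in> subdiff_graph f"
    unfolding subdiff_graph_iff
  proof (intro exI conjI allI)
    show "f y = ereal (g y + blinfun_apply vs y)" by (rule fin[OF y])
    show "ereal (g y + blinfun_apply vs y + blinfun_apply (Blinfun L + vs) (z - y)) \<le> f z" for z
    proof (cases "z \<in> edom f")
      case True
      then show ?thesis using sub[OF True] fin[OF True]
        by (simp add: ys blinfun.diff_right linear_diff[OF bounded_linear.linear[OF L]])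
    qed (simp add: edom_def)
  qed
  then show ?thesis by blast
qed

lemma subdiff_graph_nonempty:
  fixes f :: "'a::banach \<Rightarrow> ereal"
  assumes proper: "proper_fun f" and convex: "convex_fun f" and lsc: "lsc_fun f"
    and conj_finite: "fconj f vs \<noteq> \<infinity>"
  shows "subdiff_graph f \<noteq> {}"
proof -
  obtain b where b: "fconj f vs = ereal b"
    using conj_finite fconj_neq_MInf[OF proper] by (cases "fconj f vs") auto
  define \<phi> where "\<phi> z = f z + ereal (- blinfun_apply vs z)" for z
  have "lsc_fun \<phi>"
    unfolding \<phi>_def using lsc by (rule lsc_fun_add_continuous) (intro continuous_intros)
  moreover have "ereal (- b) \<le> \<phi> z" for z
    using fconj_ge[of vs z f] b by (cases "f z") (auto simp: \<phi>_def)
  moreover obtain x0 where "f x0 \<noteq> \<infinity>" using proper by (auto simp: proper_fun_def)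
  then have "\<phi> x0 \<noteq> \<infinity>" by (simp add: \<phi>_def)
  ultimately obtain y where "\<phi> y \<noteq> \<infinity>" and ekeland: "\<And>z. \<phi> y \<le> \<phi> z + ereal (dist z y)"
    by (rule ekeland_variational_principle) blast
  then have "y \<in> edom f" by (simp add: \<phi>_def edom_def)
  with proper convex have "\<exists>ys. (y, ys) \<in> subdiff_graph f"
    by (rule subdiff_graph_at_calm_point) (use ekeland in \<open>simp add: \<phi>_def dist_norm\<close>)
  then show ?thesis by blast
qed

lemma SUP_add_Inf_eq:
  fixes \<phi> :: "'p \<Rightarrow> real"
  assumes "G \<noteq> {}" and gap_in: "\<And>p. p \<in> G \<Longrightarrow> c - \<phi> p \<in> E"
    and gap_le: "\<And>e. e \<in> E \<Longrightarrow> 0 \<le> e \<and> (\<exists>p\<in>G. c - \<phi> p \<le> e)"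
  shows "(SUP p\<in>G. ereal (\<phi> p)) + Inf (ereal ` E) = ereal c"
proof -
  obtain p0 where p0: "p0 \<in> G" using assms(1) by blast
  have "(SUP p\<in>G. ereal (\<phi> p)) \<le> ereal c"
    using gap_in gap_le by (intro SUP_least) force
  moreover have "ereal (\<phi> p0) \<le> (SUP p\<in>G. ereal (\<phi> p))" using p0 by (rule SUP_upper)
  ultimately obtain s where s: "(SUP p\<in>G. ereal (\<phi> p)) = ereal s"
    by (cases "SUP p\<in>G. ereal (\<phi> p)") auto
  have Inf_le: "Inf (ereal ` E) \<le> ereal (c - \<phi> p)" if "p \<in> G" for p
    using gap_in[OF that] by (intro Inf_lower) simp
  moreover have "0 \<le> Inf (ereal ` E)" using gap_le by (intro Inf_greatest) auto
  ultimately obtain i where i: "Inf (ereal ` E) = ereal i"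
    using p0 by (cases "Inf (ereal ` E)") (auto dest: Inf_le)
  have "(SUP p\<in>G. ereal (\<phi> p)) \<le> ereal (c - i)"
  proof (rule SUP_least)
    fix p assume "p \<in> G"
    then have "i \<le> c - \<phi> p" using Inf_le i by simp
    then show "ereal (\<phi> p) \<le> ereal (c - i)" by simp
  qed
  moreover have "ereal (c - s) \<le> Inf (ereal ` E)"
  proof (rule Inf_greatest)
    fix x assume "x \<in> ereal ` E"
    then obtain e p where "x = ereal e" "p \<in> G" "c - \<phi> p \<le> e" using gap_le by blast
    moreover have "ereal (\<phi> p) \<le> ereal s" using SUP_upper[OF \<open>p \<in> G\<close>, of "\<lambda>p. ereal (\<phi> p)"] s by simp
    ultimately show "ereal (c - s) \<le> x" by simp
  qed
  ultimately show ?thesis using s i by simp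
qed

theorem lemma4p9:
  fixes f :: "'a::banach \<Rightarrow> ereal"
  assumes "proper_fun f" and "convex_fun f" and "lsc_fun f"
    and "w \<in> edom f" and "vs \<in> edom (fconj f)"
  shows "f w + fconj f vs = F_fun f w vs + K_fun f w vs"
proof -
  obtain a where a: "f w = ereal a"
    using assms(1,4) by (cases "f w") (auto simp: edom_def proper_fun_def)
  obtain b where b: "fconj f vs = ereal b"
    using assms(5) fconj_neq_MInf[OF assms(1)] by (cases "fconj f vs") (auto simp: edom_def)
  have "subdiff_graph f \<noteq> {}"
    using assms(1-3) by (rule subdiff_graph_nonempty[where vs = vs]) (simp add: b)
  then have "F_fun f w vs + K_fun f w vs = ereal (a + b)"
    unfolding F_fun_eq_SUP K_fun_def
    by (rule SUP_add_Inf_eq)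
      (blast intro: subdiff_graph_in_eps_subdiff_sum[OF _ a b] eps_subdiff_sum_nonneg
        eps_subdiff_sum_gap_le[OF _ _ a b])+
  then show ?thesis by (simp add: a b)
qed

end
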